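(* Let $\mathcal{G}$ be any Fischer space, let $\ell=\{a,b,c\}$ be a line of $\mathcal{G}$ and let $\mathcal{P}_0$ be the set of points not on $\ell$ and not collinear with any of $a,b,c$. If $v,w\in\mathcal{P}_0$ with $v\sim w$, then $v\wedge w\in\mathcal{P}_0$.
   Context: A 3-transposition group is a pair $(G,D)$ where $D$ is a conjugacy class of involutions generating $G$ with $de$ of order at most $3$ for all $d,e\in D$. Its Fischer space has point set $D$ and as lines the $3$-subsets consisting of the three involutions of a subgroup isomorphic to $\mathrm{Sym}(3)$. Distinct points on a common line are collinear ($p\sim q$), and $p\wedge q$ is the third point of that line. *)

theory Defs
  imports "HOL-Algebra.Sym_Groups" "HOL-Algebra.Generated_Groups"
begin

definition three_transposition_group :: "('a, 'b) monoid_scheme \<Rightarrow> 'a set \<Rightarrow> bool" where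
  "three_transposition_group G D \<longleftrightarrow>
     group G \<and> D \<subseteq> carrier G \<and>
     (\<exists>d \<in> carrier G. D = {inv\<^bsub>G\<^esub> g \<otimes>\<^bsub>G\<^esub> d \<otimes>\<^bsub>G\<^esub> g | g. g \<in> carrier G}) \<and>
     (\<forall>d \<in> D. d \<noteq> \<one>\<^bsub>G\<^esub> \<and> d \<otimes>\<^bsub>G\<^esub> d = \<one>\<^bsub>G\<^esub>) \<and>
     generate G D = carrier G \<and>
     (\<forall>d \<in> D. \<forall>e \<in> D. \<exists>n::nat. 1 \<le> n \<and> n \<le> 3 \<and> (d \<otimes>\<^bsub>G\<^esub> e) [^]\<^bsub>G\<^esub> n = \<one>\<^bsub>G\<^esub>)"

definition involutions_in :: "('a, 'b) monoid_scheme \<Rightarrow> 'a set \<Rightarrow> 'a set" where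
  "involutions_in G H = {x \<in> H. x \<noteq> \<one>\<^bsub>G\<^esub> \<and> x \<otimes>\<^bsub>G\<^esub> x = \<one>\<^bsub>G\<^esub>}"

definition fischer_line :: "('a, 'b) monoid_scheme \<Rightarrow> 'a set \<Rightarrow> 'a set \<Rightarrow> bool" where
  "fischer_line G D L \<longleftrightarrow> L \<subseteq> D \<and> card L = 3 \<and>
     (\<exists>H. subgroup H G \<and> G\<lparr>carrier := H\<rparr> \<cong> sym_group 3 \<and> L = involutions_in G H)"

definition fischer_collinear :: "('a, 'b) monoid_scheme \<Rightarrow> 'a set \<Rightarrow> 'a \<Rightarrow> 'a \<Rightarrow> bool" where
  "fischer_collinear G D p q \<longleftrightarrow> p \<noteq> q \<and> (\<exists>L. fischer_line G D L \<and> p \<in> L \<and> q \<in> L)"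

definition fischer_wedge :: "('a, 'b) monoid_scheme \<Rightarrow> 'a set \<Rightarrow> 'a \<Rightarrow> 'a \<Rightarrow> 'a" where
  "fischer_wedge G D p q =
     (THE r. r \<noteq> p \<and> r \<noteq> q \<and> (\<exists>L. fischer_line G D L \<and> L = {p, q, r}))"

end

theory Submission
  imports Defs
begin

(* In a 3-transposition group two points p, q of D are collinear iff they do not commute.
   A line is the set of involutions of a subgroup isomorphic to Sym(3), in which distinct
   transpositions never commute: two commuting ones would generate a Klein four-group, and 4
   does not divide 6. Conversely, if p and q do not commute then pq has order 3, so p and q
   generate a copy of Sym(3) whose involutions p, q and pqp all lie in the class D; the third
   point of the line through p and q is pqp.
   Now v and w commute with each of a, b, c, hence so does vwv; and vwv differs from each such
   x, since vwv = x would give w = vxv = x. *)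

definition perm3 :: "nat \<Rightarrow> nat \<Rightarrow> nat \<Rightarrow> nat \<Rightarrow> nat" where
  "perm3 a b c = (\<lambda>x. if x = 1 then a else if x = 2 then b else if x = 3 then c else x)"

lemma perm3_apply [simp]:
  "perm3 a b c 1 = a" "perm3 a b c (Suc 0) = a" "perm3 a b c 2 = b" "perm3 a b c 3 = c"
  by (simp_all add: perm3_def)

lemma perm3_comp [simp]:
  "perm3 a b c \<circ> perm3 a' b' c' = perm3 (perm3 a b c a') (perm3 a b c b') (perm3 a b c c')"
  by (auto simp: perm3_def fun_eq_iff)

lemma perm3_eq_iff [simp]: "perm3 a b c = perm3 a' b' c' \<longleftrightarrow> a = a' \<and> b = b' \<and> c = c'"
  by (metis perm3_apply(1,3,4))

lemma carrier_sym_group_3: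
  "carrier (sym_group 3) =
     {perm3 1 2 3, perm3 2 1 3, perm3 1 3 2, perm3 2 3 1, perm3 3 1 2, perm3 3 2 1}"
  (is "_ = ?S")
proof -
  have "carrier (sym_group 3) \<subseteq> ?S"
  proof
    fix \<sigma> assume "\<sigma> \<in> carrier (sym_group 3)"
    moreover have "{1..3::nat} = {1, 2, 3}"
      by (auto simp: numeral_3_eq_3)
    ultimately have \<sigma>: "\<sigma> permutes {1, 2, 3}"
      by (simp add: sym_group_carrier)
    have mem: "perm3 x y z \<in> ?S"
      if "x \<in> {1, 2, 3}" "y \<in> {1, 2, 3}" "z \<in> {1, 2, 3}" "x \<noteq> y" "x \<noteq> z" "y \<noteq> z" for x y z
      using that by auto
    have "\<sigma> i \<in> {1, 2, 3}" if "i \<in> {1, 2, 3}" for i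
      using permutes_in_image[OF \<sigma>] that by simp
    moreover have "\<sigma> 1 \<noteq> \<sigma> 2" "\<sigma> 1 \<noteq> \<sigma> 3" "\<sigma> 2 \<noteq> \<sigma> 3"
      using permutes_inj[OF \<sigma>] by (simp_all add: inj_eq)
    ultimately have "perm3 (\<sigma> 1) (\<sigma> 2) (\<sigma> 3) \<in> ?S"
      by (intro mem) simp_all
    moreover have "perm3 (\<sigma> 1) (\<sigma> 2) (\<sigma> 3) = \<sigma>"
      using permutes_not_in[OF \<sigma>] by (auto simp: perm3_def fun_eq_iff)
    ultimately show "\<sigma> \<in> ?S"
      by metis
  qed
  moreover have "card ?S = card (carrier (sym_group 3))"
    by (simp add: sym_group_card_carrier fact_numeral)
  ultimately show ?thesis
    by (simp add: card_subset_eq)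
qed

context group
begin

lemma involution_cancel:
  assumes "p \<in> carrier G" "p \<otimes> p = \<one>" "x \<in> carrier G"
  shows "p \<otimes> (p \<otimes> x) = x"
  using assms by (simp flip: m_assoc)

lemma involution_mult_eq_one_iff:
  assumes "p \<in> carrier G" "p \<otimes> p = \<one>" "x \<in> carrier G"
  shows "p \<otimes> x = \<one> \<longleftrightarrow> x = p"
  using assms by (metis inv_unique)

lemma involution_conj_eq_iff:
  assumes "p \<in> carrier G" "p \<otimes> p = \<one>" "x \<in> carrier G" "y \<in> carrier G"
  shows "p \<otimes> x \<otimes> p = y \<longleftrightarrow> x = p \<otimes> y \<otimes> p"
  using assms by (auto simp: m_assoc involution_cancel)

lemma involution_conj_eq_self_iff:
  assumes "p \<in> carrier G" "p \<otimes> p = \<one>" "x \<in> carrier G"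
  shows "p \<otimes> x \<otimes> p = x \<longleftrightarrow> p \<otimes> x = x \<otimes> p"
  using assms by (metis m_assoc m_closed r_one)

lemma commute_mult_closed:
  assumes "a \<in> carrier G" "b \<in> carrier G" "x \<in> carrier G"
    and "a \<otimes> x = x \<otimes> a" "b \<otimes> x = x \<otimes> b"
  shows "a \<otimes> b \<otimes> x = x \<otimes> (a \<otimes> b)"
  using assms by (metis m_assoc)

lemma involutions_commute_iff:
  assumes "p \<in> carrier G" "p \<otimes> p = \<one>" "q \<in> carrier G" "q \<otimes> q = \<one>"
  shows "p \<otimes> q = q \<otimes> p \<longleftrightarrow> p \<otimes> q \<otimes> (p \<otimes> q) = \<one>"
  using assms by (metis inv_mult_group inv_equality m_closed r_inv)

lemma involution_braid:
  assumes p: "p \<in> carrier G" and q: "q \<in> carrier G" and pp: "p \<otimes> p = \<one>" and qq: "q \<otimes> q = \<one>"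
    and o3: "(p \<otimes> q) [^] (3::nat) = \<one>"
  shows "q \<otimes> p \<otimes> q = p \<otimes> q \<otimes> p"
proof -
  have "q \<otimes> p \<otimes> q = (p \<otimes> q \<otimes> p) \<otimes> ((p \<otimes> q) [^] (3::nat))"
    using p q by (simp add: numeral_3_eq_3 nat_pow_Suc m_assoc involution_cancel pp qq)
  then show ?thesis
    using o3 p q by simp
qed

lemma sym3_words_distinct:
  assumes p: "p \<in> carrier G" and q: "q \<in> carrier G" and pp: "p \<otimes> p = \<one>" and qq: "q \<otimes> q = \<one>"
    and "p \<noteq> \<one>" "q \<noteq> \<one>" and nc: "p \<otimes> q \<noteq> q \<otimes> p"
    and braid: "q \<otimes> p \<otimes> q = p \<otimes> q \<otimes> p"
  shows "distinct [\<one>, p, q, p \<otimes> q, q \<otimes> p, p \<otimes> q \<otimes> p]"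
proof -
  have "p \<otimes> q \<noteq> \<one>" "q \<otimes> p \<noteq> \<one>"
    using nc involution_mult_eq_one_iff[OF p pp q] involution_mult_eq_one_iff[OF q qq p] by auto
  moreover have "p \<otimes> q \<otimes> p \<noteq> \<one>"
    using involution_conj_eq_iff[OF p pp q one_closed] p pp \<open>q \<noteq> \<one>\<close> by simp
  moreover have "p \<otimes> q \<otimes> p \<noteq> p"
    using involution_conj_eq_iff[OF p pp q p] p pp nc by auto
  moreover have "p \<otimes> q \<otimes> p \<noteq> q"
    using involution_conj_eq_self_iff[OF p pp q] nc by simp
  moreover have "q \<otimes> p \<noteq> q \<otimes> p \<otimes> q"
    using p q \<open>q \<noteq> \<one>\<close> by simp
  ultimately show ?thesis
    using p q nc \<open>p \<noteq> \<one>\<close> \<open>q \<noteq> \<one>\<close> braid by auto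
qed

lemma sym3_subgroup_of_involutions:
  assumes p: "p \<in> carrier G" and q: "q \<in> carrier G" and pp: "p \<otimes> p = \<one>" and qq: "q \<otimes> q = \<one>"
    and p1: "p \<noteq> \<one>" and q1: "q \<noteq> \<one>" and nc: "p \<otimes> q \<noteq> q \<otimes> p"
    and o3: "(p \<otimes> q) [^] (3::nat) = \<one>"
  defines "H \<equiv> {\<one>, p, q, p \<otimes> q, q \<otimes> p, p \<otimes> q \<otimes> p}"
  shows "subgroup H G" and "G\<lparr>carrier := H\<rparr> \<cong> sym_group 3"
proof -
  have braid: "q \<otimes> p \<otimes> q = p \<otimes> q \<otimes> p"
    using involution_braid[OF p q pp qq o3] .
  have braid_assoc: "q \<otimes> (p \<otimes> q) = p \<otimes> (q \<otimes> p)"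
    using braid p q by (simp add: m_assoc)
  have braid_left: "q \<otimes> (p \<otimes> (q \<otimes> x)) = p \<otimes> (q \<otimes> (p \<otimes> x))" if "x \<in> carrier G" for x
    using that braid p q by (simp flip: m_assoc)
  define \<psi> where "\<psi> \<sigma> =
    (if \<sigma> = perm3 1 2 3 then \<one> else if \<sigma> = perm3 2 1 3 then p
     else if \<sigma> = perm3 1 3 2 then q else if \<sigma> = perm3 2 3 1 then p \<otimes> q
     else if \<sigma> = perm3 3 1 2 then q \<otimes> p else p \<otimes> q \<otimes> p)" for \<sigma>
  have \<psi>_values:
    "\<psi> (perm3 1 2 3) = \<one>" "\<psi> (perm3 2 1 3) = p" "\<psi> (perm3 1 3 2) = q"
    "\<psi> (perm3 2 3 1) = p \<otimes> q" "\<psi> (perm3 3 1 2) = q \<otimes> p" "\<psi> (perm3 3 2 1) = p \<otimes> q \<otimes> p"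
    by (simp_all add: \<psi>_def)
  \<comment> \<open>Below, One_nat_def (1 = Suc 0) is removed from the simpset so that the arguments
    of perm3 stay numerals and \<psi>_values keep matching.\<close>
  have mult: "\<psi> (\<sigma> \<circ> \<tau>) = \<psi> \<sigma> \<otimes> \<psi> \<tau>"
    if "\<sigma> \<in> carrier (sym_group 3)" "\<tau> \<in> carrier (sym_group 3)" for \<sigma> \<tau>
    using that unfolding carrier_sym_group_3
    by (elim insertE emptyE; simp add: \<psi>_values p q m_assoc involution_cancel[OF p pp]
        involution_cancel[OF q qq] braid_assoc braid_left pp qq del: One_nat_def)
  have hom: "\<psi> \<in> hom (sym_group 3) G"
  proof (rule homI)
    show "\<psi> \<sigma> \<in> carrier G" if "\<sigma> \<in> carrier (sym_group 3)" for \<sigma>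
      using that p q unfolding carrier_sym_group_3 by (auto simp: \<psi>_values simp del: One_nat_def)
    show "\<psi> (\<sigma> \<otimes>\<^bsub>sym_group 3\<^esub> \<tau>) = \<psi> \<sigma> \<otimes> \<psi> \<tau>"
      if "\<sigma> \<in> carrier (sym_group 3)" "\<tau> \<in> carrier (sym_group 3)" for \<sigma> \<tau>
      using mult[OF that] by (simp add: sym_group_mult)
  qed
  have image: "\<psi> ` carrier (sym_group 3) = H"
    unfolding carrier_sym_group_3 H_def by (auto simp: \<psi>_values simp del: One_nat_def)
  have inj: "inj_on \<psi> (carrier (sym_group 3))"
    using sym3_words_distinct[OF p q pp qq p1 q1 nc braid]
    unfolding carrier_sym_group_3 by (auto simp: inj_on_def \<psi>_values simp del: One_nat_def)
  interpret \<psi>: group_hom "sym_group 3" G \<psi>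
    using hom sym_group_is_group is_group by (simp add: group_hom_def group_hom_axioms_def)
  show "subgroup H G"
    using \<psi>.img_is_subgroup image by simp
  have "\<psi> \<in> iso (sym_group 3) (G\<lparr>carrier := H\<rparr>)"
    using hom image inj by (auto simp: iso_def hom_def bij_betw_def)
  then show "G\<lparr>carrier := H\<rparr> \<cong> sym_group 3"
    by (simp add: is_isoI group.iso_sym[OF sym_group_is_group])
qed

lemma involutions_in_sym3_words:
  assumes p: "p \<in> carrier G" and q: "q \<in> carrier G" and pp: "p \<otimes> p = \<one>" and qq: "q \<otimes> q = \<one>"
    and p1: "p \<noteq> \<one>" and q1: "q \<noteq> \<one>" and nc: "p \<otimes> q \<noteq> q \<otimes> p"
  shows "involutions_in G {\<one>, p, q, p \<otimes> q, q \<otimes> p, p \<otimes> q \<otimes> p} = {p, q, p \<otimes> q \<otimes> p}"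
proof -
  have "p \<otimes> q \<otimes> (p \<otimes> q) \<noteq> \<one>" "q \<otimes> p \<otimes> (q \<otimes> p) \<noteq> \<one>"
    using nc involutions_commute_iff[OF p pp q qq] involutions_commute_iff[OF q qq p pp] by auto
  moreover have "p \<otimes> q \<otimes> p \<otimes> (p \<otimes> q \<otimes> p) = \<one>"
    using p q pp qq by (simp add: m_assoc involution_cancel)
  moreover have "p \<otimes> q \<otimes> p \<noteq> \<one>"
    using involution_conj_eq_iff[OF p pp q one_closed] p pp q1 by simp
  ultimately show ?thesis
    using pp qq p1 q1 unfolding involutions_in_def by auto
qed

lemma klein_four_subgroup:
  assumes p: "p \<in> carrier G" and q: "q \<in> carrier G" and pp: "p \<otimes> p = \<one>" and qq: "q \<otimes> q = \<one>"
    and "p \<noteq> \<one>" "q \<noteq> \<one>" "p \<noteq> q" and comm: "p \<otimes> q = q \<otimes> p"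
  shows "subgroup {\<one>, p, q, p \<otimes> q} G" and "card {\<one>, p, q, p \<otimes> q} = 4"
proof -
  show "subgroup {\<one>, p, q, p \<otimes> q} G"
  proof (rule subgroupI)
    show "inv x \<in> {\<one>, p, q, p \<otimes> q}" if "x \<in> {\<one>, p, q, p \<otimes> q}" for x
      using that p q pp qq comm[symmetric] by (auto simp: inv_mult_group inv_equality)
    have "p \<otimes> (p \<otimes> q) = q" "q \<otimes> (p \<otimes> q) = p"
      using involution_cancel[OF p pp q] involution_cancel[OF q qq p] comm by simp_all
    moreover have pqp: "p \<otimes> q \<otimes> p = q" and "p \<otimes> q \<otimes> q = p"
      using p q pp qq comm by (simp_all add: m_assoc involution_cancel)
    moreover have "p \<otimes> q \<otimes> (p \<otimes> q) = \<one>"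
      using p q qq pqp by (simp flip: m_assoc)
    ultimately show "x \<otimes> y \<in> {\<one>, p, q, p \<otimes> q}"
      if "x \<in> {\<one>, p, q, p \<otimes> q}" "y \<in> {\<one>, p, q, p \<otimes> q}" for x y
      using that p q pp qq comm[symmetric] by auto
  qed (use p q in auto)
  have "p \<otimes> q \<noteq> \<one>"
    using involution_mult_eq_one_iff[OF p pp q] \<open>p \<noteq> q\<close> by simp
  moreover have "p \<otimes> q \<noteq> p" "p \<otimes> q \<noteq> q"
    using p q \<open>p \<noteq> \<one>\<close> \<open>q \<noteq> \<one>\<close> by simp_all
  ultimately show "card {\<one>, p, q, p \<otimes> q} = 4"
    using \<open>p \<noteq> \<one>\<close> \<open>q \<noteq> \<one>\<close> \<open>p \<noteq> q\<close> by simp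
qed

lemma sym3_involutions_not_commute:
  assumes sub: "subgroup H G" and iso: "G\<lparr>carrier := H\<rparr> \<cong> sym_group 3"
    and inv: "p \<in> involutions_in G H" "q \<in> involutions_in G H" and "p \<noteq> q"
  shows "p \<otimes> q \<noteq> q \<otimes> p"
proof
  assume comm: "p \<otimes> q = q \<otimes> p"
  have pH: "p \<in> H" "p \<otimes> p = \<one>" "p \<noteq> \<one>" and qH: "q \<in> H" "q \<otimes> q = \<one>" "q \<noteq> \<one>"
    using inv by (auto simp: involutions_in_def)
  have p: "p \<in> carrier G" and q: "q \<in> carrier G"
    using pH qH sub by (auto dest: subgroup.mem_carrier)
  define K where "K = {\<one>, p, q, p \<otimes> q}"
  note K = klein_four_subgroup[OF p q pH(2) qH(2) pH(3) qH(3) \<open>p \<noteq> q\<close> comm, folded K_def]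
  have "K \<subseteq> H"
    using pH qH sub by (auto simp: K_def subgroup.one_closed subgroup.m_closed)
  then have KH: "subgroup K (G\<lparr>carrier := H\<rparr>)"
    using subgroup_incl K(1) sub by blast
  interpret H: group "G\<lparr>carrier := H\<rparr>"
    using subgroup.subgroup_is_group[OF sub is_group] .
  have "card K dvd order (G\<lparr>carrier := H\<rparr>)"
    by (metis H.lagrange[OF KH] dvd_triv_right)
  moreover have "order (G\<lparr>carrier := H\<rparr>) = 6"
    using iso_same_card[OF iso] by (simp add: order_def sym_group_card_carrier fact_numeral)
  ultimately show False
    using K(2) by simp
qed

end

lemma three_transposition_group_is_group: "three_transposition_group G D \<Longrightarrow> group G"
  unfolding three_transposition_group_def by blast

context group
begin

lemma three_transposition_group_memD:
  assumes "three_transposition_group G D" "d \<in> D"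
  shows "d \<in> carrier G" "d \<noteq> \<one>" "d \<otimes> d = \<one>"
  using assms unfolding three_transposition_group_def by auto

lemma three_transposition_group_conj_mem:
  assumes T: "three_transposition_group G D" and "p \<in> D" "q \<in> D"
  shows "p \<otimes> q \<otimes> p \<in> D"
proof -
  have p: "p \<in> carrier G" "p \<otimes> p = \<one>"
    using three_transposition_group_memD[OF T \<open>p \<in> D\<close>] by auto
  obtain d where d: "d \<in> carrier G" "D = {inv g \<otimes> d \<otimes> g | g. g \<in> carrier G}"
    using T unfolding three_transposition_group_def by blast
  then obtain g where g: "g \<in> carrier G" "q = inv g \<otimes> d \<otimes> g"
    using \<open>q \<in> D\<close> by blast
  have "inv p = p"
    using p by (simp add: inv_equality)
  then have "p \<otimes> q \<otimes> p = inv (g \<otimes> p) \<otimes> d \<otimes> (g \<otimes> p)"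
    using g d(1) p by (simp add: inv_mult_group m_assoc)
  then show ?thesis
    using d g(1) p(1) by auto
qed

lemma three_transposition_group_order_3:
  assumes T: "three_transposition_group G D" and "p \<in> D" "q \<in> D"
    and nc: "p \<otimes> q \<noteq> q \<otimes> p"
  shows "(p \<otimes> q) [^] (3::nat) = \<one>"
proof -
  have p: "p \<in> carrier G" "p \<otimes> p = \<one>" and q: "q \<in> carrier G" "q \<otimes> q = \<one>"
    using three_transposition_group_memD[OF T \<open>p \<in> D\<close>]
      three_transposition_group_memD[OF T \<open>q \<in> D\<close>] by auto
  obtain n :: nat where "1 \<le> n" "n \<le> 3" "(p \<otimes> q) [^] n = \<one>"
    using T \<open>p \<in> D\<close> \<open>q \<in> D\<close> unfolding three_transposition_group_def by blast
  moreover have "n = 1 \<or> n = 2 \<or> n = 3"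
    using \<open>1 \<le> n\<close> \<open>n \<le> 3\<close> by auto
  moreover have "(p \<otimes> q) [^] (1::nat) \<noteq> \<one>"
    using involution_mult_eq_one_iff[OF p q(1)] nc p q by auto
  moreover have "(p \<otimes> q) [^] (2::nat) \<noteq> \<one>"
    using involutions_commute_iff[OF p q] nc p q by (simp add: numeral_2_eq_2)
  ultimately show ?thesis
    by auto
qed

lemma fischer_collinear_iff_not_commute:
  assumes T: "three_transposition_group G D" and pD: "p \<in> D" and qD: "q \<in> D"
  shows "fischer_collinear G D p q \<longleftrightarrow> p \<otimes> q \<noteq> q \<otimes> p"
proof
  assume "fischer_collinear G D p q"
  then obtain H where "p \<noteq> q" "p \<in> involutions_in G H" "q \<in> involutions_in G H"
    and "subgroup H G" "G\<lparr>carrier := H\<rparr> \<cong> sym_group 3"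
    unfolding fischer_collinear_def fischer_line_def by blast
  then show "p \<otimes> q \<noteq> q \<otimes> p"
    using sym3_involutions_not_commute by blast
next
  assume nc: "p \<otimes> q \<noteq> q \<otimes> p"
  note p = three_transposition_group_memD[OF T pD] and q = three_transposition_group_memD[OF T qD]
  define H where "H = {\<one>, p, q, p \<otimes> q, q \<otimes> p, p \<otimes> q \<otimes> p}"
  have o3: "(p \<otimes> q) [^] (3::nat) = \<one>"
    using three_transposition_group_order_3[OF T pD qD nc] .
  have "subgroup H G" "G\<lparr>carrier := H\<rparr> \<cong> sym_group 3"
    unfolding H_def using sym3_subgroup_of_involutions[OF p(1) q(1) p(3) q(3) p(2) q(2) nc o3] by auto
  moreover have "involutions_in G H = {p, q, p \<otimes> q \<otimes> p}"
    unfolding H_def using involutions_in_sym3_words[OF p(1) q(1) p(3) q(3) p(2) q(2) nc] .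
  moreover have "{p, q, p \<otimes> q \<otimes> p} \<subseteq> D"
    using pD qD three_transposition_group_conj_mem[OF T pD qD] by blast
  moreover have "card {p, q, p \<otimes> q \<otimes> p} = 3"
  proof -
    have "p \<noteq> q" "p \<otimes> q \<otimes> p \<noteq> q"
      using nc involution_conj_eq_self_iff[OF p(1) p(3) q(1)] by auto
    moreover have "p \<otimes> q \<otimes> p \<noteq> p"
      using involution_conj_eq_iff[OF p(1) p(3) q(1) p(1)] \<open>p \<noteq> q\<close> p by (simp add: m_assoc)
    ultimately show ?thesis
      by simp
  qed
  ultimately have "fischer_line G D {p, q, p \<otimes> q \<otimes> p}"
    unfolding fischer_line_def by blast
  then show "fischer_collinear G D p q"
    using nc unfolding fischer_collinear_def by auto
qed

lemma fischer_line_conj_mem: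
  assumes L: "fischer_line G D L" and "p \<in> L" "q \<in> L"
  shows "p \<otimes> q \<otimes> p \<in> L"
proof -
  obtain H where sub: "subgroup H G" and LH: "L = involutions_in G H"
    using L unfolding fischer_line_def by blast
  have p: "p \<in> H" "p \<otimes> p = \<one>" and q: "q \<in> H" "q \<otimes> q = \<one>" "q \<noteq> \<one>"
    using \<open>p \<in> L\<close> \<open>q \<in> L\<close> LH by (auto simp: involutions_in_def)
  have pG: "p \<in> carrier G" and qG: "q \<in> carrier G"
    using p(1) q(1) sub by (auto dest: subgroup.mem_carrier)
  have "p \<otimes> q \<otimes> p \<in> H"
    using p(1) q(1) sub by (simp add: subgroup.m_closed)
  moreover have "p \<otimes> q \<otimes> p \<otimes> (p \<otimes> q \<otimes> p) = \<one>"
    using pG qG p(2) q(2) by (simp add: m_assoc involution_cancel)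
  moreover have "p \<otimes> q \<otimes> p \<noteq> \<one>"
    using involution_conj_eq_iff[OF pG p(2) qG one_closed] pG p(2) q(3) by simp
  ultimately show ?thesis
    unfolding LH involutions_in_def by blast
qed

lemma fischer_wedge_eq:
  assumes T: "three_transposition_group G D" and col: "fischer_collinear G D p q"
  shows "fischer_wedge G D p q = p \<otimes> q \<otimes> p"
proof -
  obtain L where "p \<noteq> q" and L: "fischer_line G D L" "p \<in> L" "q \<in> L"
    using col unfolding fischer_collinear_def by blast
  have pD: "p \<in> D" and qD: "q \<in> D"
    using L unfolding fischer_line_def by auto
  note p = three_transposition_group_memD[OF T pD] and q = three_transposition_group_memD[OF T qD]
  have ne: "p \<otimes> q \<otimes> p \<noteq> p" "p \<otimes> q \<otimes> p \<noteq> q"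
    using involution_conj_eq_iff[OF p(1) p(3) q(1) p(1)] \<open>p \<noteq> q\<close> p
      involution_conj_eq_self_iff[OF p(1) p(3) q(1)] col fischer_collinear_iff_not_commute[OF T pD qD]
    by (auto simp: m_assoc)
  have "L = {p, q, p \<otimes> q \<otimes> p}"
  proof (rule card_subset_eq[symmetric])
    show "finite L" "{p, q, p \<otimes> q \<otimes> p} \<subseteq> L" "card {p, q, p \<otimes> q \<otimes> p} = card L"
      using L fischer_line_conj_mem[OF L] ne \<open>p \<noteq> q\<close> unfolding fischer_line_def
      by (auto intro: card_ge_0_finite)
  qed
  then have "fischer_line G D {p, q, p \<otimes> q \<otimes> p}"
    using L(1) by simp
  then show ?thesis
    unfolding fischer_wedge_def
    using ne fischer_line_conj_mem by (intro the_equality) blast+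
qed

lemma fischer_conj_not_collinear:
  assumes T: "three_transposition_group G D" and vD: "v \<in> D" and wD: "w \<in> D" and xD: "x \<in> D"
    and "w \<noteq> x" "\<not> fischer_collinear G D v x" "\<not> fischer_collinear G D w x"
  shows "v \<otimes> w \<otimes> v \<noteq> x" and "\<not> fischer_collinear G D (v \<otimes> w \<otimes> v) x"
proof -
  note v = three_transposition_group_memD[OF T vD] and w = three_transposition_group_memD[OF T wD]
    and x = three_transposition_group_memD[OF T xD]
  have vx: "v \<otimes> x = x \<otimes> v" and wx: "w \<otimes> x = x \<otimes> w"
    using assms fischer_collinear_iff_not_commute by blast+
  show "v \<otimes> w \<otimes> v \<noteq> x"
    using involution_conj_eq_iff[OF v(1) v(3) w(1) x(1)] involution_conj_eq_self_iff[OF v(1) v(3) x(1)]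
      vx \<open>w \<noteq> x\<close> by simp
  have "v \<otimes> w \<otimes> x = x \<otimes> (v \<otimes> w)"
    using commute_mult_closed[OF v(1) w(1) x(1) vx wx] .
  then have "v \<otimes> w \<otimes> v \<otimes> x = x \<otimes> (v \<otimes> w \<otimes> v)"
    using commute_mult_closed[OF m_closed[OF v(1) w(1)] v(1) x(1) _ vx] by blast
  then show "\<not> fischer_collinear G D (v \<otimes> w \<otimes> v) x"
    using fischer_collinear_iff_not_commute[OF T three_transposition_group_conj_mem[OF T vD wD] xD]
    by simp
qed

end

theorem proposition5p23:
  fixes G :: "('a, 'b) monoid_scheme" and D :: "'a set" and a b c v w :: 'a
  assumes "three_transposition_group G D"
    and "fischer_line G D {a, b, c}"
    and "v \<in> {p \<in> D. p \<notin> {a, b, c} \<and> \<not> fischer_collinear G D p a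
                 \<and> \<not> fischer_collinear G D p b \<and> \<not> fischer_collinear G D p c}"
    and "w \<in> {p \<in> D. p \<notin> {a, b, c} \<and> \<not> fischer_collinear G D p a
                 \<and> \<not> fischer_collinear G D p b \<and> \<not> fischer_collinear G D p c}"
    and "fischer_collinear G D v w"
  shows "fischer_wedge G D v w \<in> {p \<in> D. p \<notin> {a, b, c} \<and> \<not> fischer_collinear G D p a
                 \<and> \<not> fischer_collinear G D p b \<and> \<not> fischer_collinear G D p c}"
proof -
  have grp: "group G"
    using assms(1) by (rule three_transposition_group_is_group)
  have vD: "v \<in> D" and wD: "w \<in> D" and abcD: "{a, b, c} \<subseteq> D"
    using assms(2-4) unfolding fischer_line_def by simp_all
  have "fischer_wedge G D v w = v \<otimes>\<^bsub>G\<^esub> w \<otimes>\<^bsub>G\<^esub> v"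
    using group.fischer_wedge_eq[OF grp assms(1,5)] .
  moreover have "v \<otimes>\<^bsub>G\<^esub> w \<otimes>\<^bsub>G\<^esub> v \<in> D"
    using group.three_transposition_group_conj_mem[OF grp assms(1) vD wD] .
  moreover have "v \<otimes>\<^bsub>G\<^esub> w \<otimes>\<^bsub>G\<^esub> v \<noteq> x \<and> \<not> fischer_collinear G D (v \<otimes>\<^bsub>G\<^esub> w \<otimes>\<^bsub>G\<^esub> v) x"
    if "x \<in> {a, b, c}" for x
    using group.fischer_conj_not_collinear[OF grp assms(1) vD wD] that abcD assms(3,4) by blast
  ultimately show ?thesis
    by auto
qed

end
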